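(* Let $\Sigma\subset(0,\infty)$ be an unbounded set of parameters $\sigma$, and for each $\sigma\in\Sigma$ let $N_\sigma$ be a positive integer and $\mu_\sigma\in(0,1)$ be such that $\sigma=\sqrt{N_\sigma\mu_\sigma(1-\mu_\sigma)}$. Put $E_\sigma=N_\sigma\mu_\sigma$, and for real $x$ put $m(\sigma,x)=E_\sigma-\sigma x$ and $n(\sigma,x)=N_\sigma-m(\sigma,x)$. Define (for $\sigma$ large enough) $$b(\sigma,x)=\frac{\Gamma(N_\sigma+1)}{\Gamma(n(\sigma,x)+1)\,\Gamma(m(\sigma,x)+1)}\,\mu_\sigma^{m(\sigma,x)}(1-\mu_\sigma)^{n(\sigma,x)}.$$ Assume that $E_\sigma=\sigma^2+1+O(1/\sigma^2)$ as $\sigma\to\infty$, and let $\alpha>0$ be fixed. Then on the intervals $I_\sigma=[-\sigma^{1-\alpha},\sigma^{1-\alpha}]$, $$b(\sigma,x)-b(\sigma,-x)=\Big(\frac{1}{3\sqrt{2\pi}}x(3-x^2)e^{-x^2/2}\Big)\frac{1}{\sigma^2}+O\Big(\frac{1}{\sigma^3}\Big),$$ where the $O$ is uniform in $x\in I_\sigma$: there exist $C>0$ and $\sigma_0$ such that the error is at most $C/\sigma^3$ in absolute value for all $\sigma\in\Sigma$ with $\sigma>\sigma_0$ and all $x\in I_\sigma$.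
   Context: $b(\sigma,\cdot)$ is the continuous (Gamma-function) interpolation of the binomial mass function with $N_\sigma$ trials and success probability $\mu_\sigma$, evaluated at $m(\sigma,x)$. *)

theory Defs
  imports "HOL-Analysis.Analysis"
begin

definition binom_interp :: "nat \<Rightarrow> real \<Rightarrow> real \<Rightarrow> real" where
  "binom_interp Nn mu m =
     Gamma (real Nn + 1) / (Gamma (real Nn - m + 1) * Gamma (m + 1))
     * mu powr m * (1 - mu) powr (real Nn - m)"

definition bfun :: "(real \<Rightarrow> nat) \<Rightarrow> (real \<Rightarrow> real) \<Rightarrow> real \<Rightarrow> real \<Rightarrow> real" where
  "bfun N mu \<sigma> x = binom_interp (N \<sigma>) (mu \<sigma>) (real (N \<sigma>) * mu \<sigma> - \<sigma> * x)"

end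

theory Submission
  imports Defs "HOL-Real_Asymp.Real_Asymp"
begin

text \<open>Stirling's formula with the explicit error 2/z writes the Gamma-interpolated binomial weight
  at m = E - \<sigma> x as exp(\<Phi>(x) + O(\<sigma>^-2)) / (\<sigma> sqrt(2\<pi>)), where
  \<Phi>(x) = - E h(-u) - F h(v) - (ln(1 - u) + ln(1 + v))/2 with u = \<sigma>x/E, v = \<sigma>x/F, F = N - E
  and h Bennett's function. Expanding h to third order and using E = \<sigma>^2 + 1 + O(\<sigma>^-2) and
  F \<ge> \<sigma>^4 gives \<Phi>(x) = - x^2/2 + (x/2 - x^3/6)/\<sigma> + O((1 + |x|)^4/\<sigma>^2) as long as
  (1 + |x|)^8 \<le> \<sigma>. In the odd part b(\<sigma>,x) - b(\<sigma>,-x) the even terms cancel, leaving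
  exp(-x^2/2) (2 (x/2 - x^3/6)/\<sigma> + O((1 + |x|)^8/\<sigma>^2)) / (\<sigma> sqrt(2\<pi>)), and the Gaussian absorbs
  the polynomial factor. For the remaining x with |x| \<le> \<sigma>/4, which covers I_\<sigma>, all three
  terms are O(exp(-x^2/8)) = O(\<sigma>^-3).\<close>

lemma abs_le_deriv_bound_mul_abs:
  fixes f f' :: "real \<Rightarrow> real"
  assumes "f 0 = 0"
    and "\<And>t. \<bar>t\<bar> \<le> \<bar>w\<bar> \<Longrightarrow> (f has_real_derivative f' t) (at t)"
    and "\<And>t. \<bar>t\<bar> \<le> \<bar>w\<bar> \<Longrightarrow> \<bar>f' t\<bar> \<le> B"
  shows "\<bar>f w\<bar> \<le> B * \<bar>w\<bar>"
proof -
  have in_range: "\<bar>z\<bar> \<le> \<bar>w\<bar>" if "z \<in> {-\<bar>w\<bar>..\<bar>w\<bar>}" for z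
    using that by auto
  have "norm (f w - f 0) \<le> B * norm (w - 0)"
    by (rule field_differentiable_bound[where S = "{-\<bar>w\<bar>..\<bar>w\<bar>}" and f' = f'])
      (auto intro!: has_field_derivative_at_within assms(2,3) in_range)
  thus ?thesis using assms(1) by simp
qed

lemma abs_ln_one_plus_x_minus_cubic_bound:
  fixes w :: real
  assumes "\<bar>w\<bar> \<le> 1/2"
  shows "\<bar>ln (1 + w) - (w - w\<^sup>2/2 + w^3/3)\<bar> \<le> 2 * w^4"
proof -
  have "\<bar>ln (1 + w) - (w - w\<^sup>2/2 + w^3/3)\<bar> \<le> (2 * \<bar>w\<bar>^3) * \<bar>w\<bar>"
  proof (rule abs_le_deriv_bound_mul_abs[where f = "\<lambda>t. ln (1 + t) - (t - t\<^sup>2/2 + t^3/3)"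
        and f' = "\<lambda>t. 1/(1+t) - (1 - t + t\<^sup>2)"])
    fix t :: real assume t: "\<bar>t\<bar> \<le> \<bar>w\<bar>"
    hence t_pos: "1 + t > 0" and t_half: "1 + t \<ge> 1/2" using assms by auto
    thus "((\<lambda>t. ln (1 + t) - (t - t\<^sup>2/2 + t^3/3)) has_real_derivative 1/(1+t) - (1 - t + t\<^sup>2)) (at t)"
      by (auto intro!: derivative_eq_intros simp: power2_eq_square field_simps)
    have "1/(1+t) - (1 - t + t\<^sup>2) = -(t^3)/(1+t)"
      using t_pos by (simp add: field_simps power2_eq_square power3_eq_cube)
    also have "\<bar>\<dots>\<bar> = \<bar>t\<bar>^3/(1+t)" using t_pos by (simp add: abs_mult power_abs)
    also have "\<dots> \<le> \<bar>t\<bar>^3/(1/2)" using t_half by (intro divide_left_mono) auto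
    also have "\<dots> \<le> 2*\<bar>w\<bar>^3" using t by (simp add: power_mono)
    finally show "\<bar>1/(1+t) - (1 - t + t\<^sup>2)\<bar> \<le> 2*\<bar>w\<bar>^3" .
  qed simp
  also have "(2 * \<bar>w\<bar>^3) * \<bar>w\<bar> = 2 * w^4"
    by (simp add: power_abs power_Suc2[symmetric] del: power_Suc2)
  finally show ?thesis .
qed

lemma ln_one_plus_ge_quadratic:
  fixes t :: real assumes "t \<ge> 0" shows "t - t\<^sup>2/2 \<le> ln (1 + t)"
proof -
  have "(\<lambda>t. ln (1 + t) - (t - t\<^sup>2/2)) 0 \<le> (\<lambda>t. ln (1 + t) - (t - t\<^sup>2/2)) t"
  proof (rule DERIV_nonneg_imp_nondecreasing[OF assms])
    fix x :: real assume "0 \<le> x" "x \<le> t"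
    thus "\<exists>y. ((\<lambda>t. ln (1 + t) - (t - t\<^sup>2/2)) has_real_derivative y) (at x) \<and> y \<ge> 0"
      by (intro exI[of _ "1/(1+x) - (1 - x)"] conjI)
        (auto intro!: derivative_eq_intros simp: field_simps power2_eq_square)
  qed
  thus ?thesis by simp
qed

lemma ln_one_plus_le_cubic:
  fixes t :: real assumes "t \<ge> 0" shows "ln (1 + t) \<le> t - t\<^sup>2/2 + t^3/3"
proof -
  have "(\<lambda>t. (t - t\<^sup>2/2 + t^3/3) - ln (1 + t)) 0 \<le> (\<lambda>t. (t - t\<^sup>2/2 + t^3/3) - ln (1 + t)) t"
  proof (rule DERIV_nonneg_imp_nondecreasing[OF assms])
    fix x :: real assume "0 \<le> x" "x \<le> t"
    thus "\<exists>y. ((\<lambda>t. (t - t\<^sup>2/2 + t^3/3) - ln (1 + t)) has_real_derivative y) (at x) \<and> y \<ge> 0"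
      by (intro exI[of _ "(1 - x + x\<^sup>2) - 1/(1+x)"] conjI)
        (auto intro!: derivative_eq_intros simp: field_simps power2_eq_square power3_eq_cube)
  qed
  thus ?thesis by simp
qed

lemma abs_exp_minus_one_minus_x_bound:
  fixes p :: real assumes "\<bar>p\<bar> \<le> 1" shows "\<bar>exp p - 1 - p\<bar> \<le> 3 * p\<^sup>2"
proof -
  have exp_le_3: "exp t \<le> 3" if "\<bar>t\<bar> \<le> 1" for t :: real
    using that exp_le order_trans[of "exp t" "exp 1" 3] by simp
  have "\<bar>exp p - 1 - p\<bar> \<le> (3 * \<bar>p\<bar>) * \<bar>p\<bar>"
  proof (rule abs_le_deriv_bound_mul_abs[where f = "\<lambda>t. exp t - 1 - t" and f' = "\<lambda>t. exp t - 1"])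
    fix t :: real assume t: "\<bar>t\<bar> \<le> \<bar>p\<bar>"
    show "((\<lambda>t. exp t - 1 - t) has_real_derivative exp t - 1) (at t)"
      by (auto intro!: derivative_eq_intros)
    have "\<bar>exp t - 1\<bar> \<le> 3 * \<bar>t\<bar>"
      by (rule abs_le_deriv_bound_mul_abs[where f = "\<lambda>t. exp t - 1" and f' = exp, simplified])
        (use t assms exp_le_3 in \<open>auto intro!: derivative_eq_intros\<close>)
    thus "\<bar>exp t - 1\<bar> \<le> 3 * \<bar>p\<bar>" using t by linarith
  qed simp
  thus ?thesis by (simp add: power2_eq_square)
qed

lemma power_mult_exp_neg_le_fact:
  fixes y :: real assumes "0 \<le> y" shows "y ^ k * exp (- y) \<le> fact k"
proof -
  have "y ^ k / fact k = (\<Sum>n\<in>{k}. y ^ n / fact n)" by simp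
  also have "\<dots> \<le> (\<Sum>n. y ^ n / fact n)"
    using summable_exp[of y] assms by (intro sum_le_suminf) (auto simp: field_simps)
  also have "\<dots> = exp y" by (simp add: exp_def inverse_eq_divide scaleR_conv_of_real)
  finally show ?thesis by (simp add: exp_minus field_simps)
qed

lemma one_plus_abs_pow8_mult_exp_le: "(1 + \<bar>x\<bar>)^8 * exp (- x\<^sup>2/4) \<le> 256 * 6145"
  for x :: real
proof -
  have "(1 + \<bar>x\<bar>)^8 \<le> (2 * max 1 \<bar>x\<bar>)^8" by (intro power_mono) auto
  also have "\<dots> \<le> 256 * (1 + x^8)"
    by (cases "\<bar>x\<bar> \<le> 1") (auto simp: max_def power_mult_distrib power_even_abs_numeral)
  finally have "(1 + \<bar>x\<bar>)^8 * exp (- x\<^sup>2/4) \<le> 256 * (1 + x^8) * exp (- x\<^sup>2/4)"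
    by (intro mult_right_mono) auto
  also have "\<dots> = 256 * (exp (- x\<^sup>2/4) + 256 * ((x\<^sup>2/4)^4 * exp (- x\<^sup>2/4)))"
    by (simp add: power_divide algebra_simps flip: power_mult)
  also have "\<dots> \<le> 256 * (1 + 256 * fact 4)"
    using power_mult_exp_neg_le_fact[of "x\<^sup>2/4" 4] by (intro mult_left_mono add_mono) auto
  finally show ?thesis by (simp add: fact_numeral)
qed

lemma exp_neg_sq_le_of_large_pow8:
  fixes s x :: real assumes s: "256 \<le> s" and large: "s < (1 + \<bar>x\<bar>)^8"
  shows "exp (- x\<^sup>2/8) \<le> 256^3 * 8^12 * fact 12 / s^3"
proof -
  have "1 \<le> \<bar>x\<bar>"
  proof (rule ccontr)
    assume "\<not> 1 \<le> \<bar>x\<bar>"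
    hence "(1 + \<bar>x\<bar>)^8 \<le> 2^8" by (intro power_mono) auto
    thus False using large s by simp
  qed
  hence "(1 + \<bar>x\<bar>)^8 \<le> (256 * 8^4) * (x\<^sup>2/8)^4"
    using power_mono[of "1 + \<bar>x\<bar>" "2 * \<bar>x\<bar>" 8]
    by (simp add: power_mult_distrib power_divide power_even_abs_numeral flip: power_mult)
  hence "s / (256 * 8^4) \<le> (x\<^sup>2/8)^4" using large by (simp add: field_simps)
  hence "(s / (256 * 8^4))^3 \<le> ((x\<^sup>2/8)^4)^3" using s by (intro power_mono) auto
  hence "(s / (256 * 8^4))^3 * exp (- x\<^sup>2/8) \<le> (x\<^sup>2/8)^12 * exp (- (x\<^sup>2/8))"
    by (simp flip: power_mult)
  also have "\<dots> \<le> fact 12" by (rule power_mult_exp_neg_le_fact) simp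
  finally have "exp (- x\<^sup>2/8) \<le> fact 12 / (s / (256 * 8^4))^3"
    using s by (simp add: pos_le_divide_eq mult.commute)
  also have "\<dots> = (256 * 8^4)^3 * fact 12 / s^3" by (simp add: power_divide)
  finally show ?thesis by (simp add: power_mult_distrib flip: power_mult)
qed

lemma abs_exp_odd_diff_le:
  fixes a r1 r2 :: real
  assumes "\<bar>a + r1\<bar> \<le> 1" "\<bar>- a + r2\<bar> \<le> 1"
  shows "\<bar>exp (a + r1) - exp (- a + r2) - 2 * a\<bar> \<le> 12 * a\<^sup>2 + 6 * r1\<^sup>2 + 6 * r2\<^sup>2 + \<bar>r1\<bar> + \<bar>r2\<bar>"
proof -
  define A where "A = exp (a + r1) - 1 - (a + r1)"
  define B where "B = exp (- a + r2) - 1 - (- a + r2)"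
  have "\<bar>A\<bar> \<le> 3 * (a + r1)\<^sup>2" "\<bar>B\<bar> \<le> 3 * (- a + r2)\<^sup>2"
    unfolding A_def B_def using assms by (auto intro: abs_exp_minus_one_minus_x_bound)
  moreover have "(a + r1)\<^sup>2 \<le> 2 * a\<^sup>2 + 2 * r1\<^sup>2" "(- a + r2)\<^sup>2 \<le> 2 * a\<^sup>2 + 2 * r2\<^sup>2"
    using zero_le_power2[of "a - r1"] zero_le_power2[of "a + r2"] by (simp_all add: power2_eq_square algebra_simps)
  moreover have "exp (a + r1) - exp (- a + r2) - 2 * a = (A - B) + (r1 - r2)"
    by (simp add: A_def B_def)
  moreover have "\<bar>(A - B) + (r1 - r2)\<bar> \<le> \<bar>A\<bar> + \<bar>B\<bar> + (\<bar>r1\<bar> + \<bar>r2\<bar>)"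
    using abs_triangle_ineq[of "A - B" "r1 - r2"] abs_triangle_ineq4[of A B] abs_triangle_ineq4[of r1 r2]
    by linarith
  ultimately show ?thesis by linarith
qed

lemma one_plus_abs_cube_le:
  fixes s x :: real assumes s: "256 \<le> s" and x: "(1 + \<bar>x\<bar>)^8 \<le> s"
  shows "(1 + \<bar>x\<bar>)^3 \<le> s / 16"
proof (rule power2_le_imp_le)
  have "((1 + \<bar>x\<bar>)^3)\<^sup>2 \<le> (1 + \<bar>x\<bar>)^8" by (simp add: power_increasing flip: power_mult)
  also have "\<dots> \<le> s" using x .
  also have "s \<le> (s / 16)\<^sup>2" using s by (simp add: power2_eq_square field_simps)
  finally show "((1 + \<bar>x\<bar>)^3)\<^sup>2 \<le> (s / 16)\<^sup>2" .
qed (use s in simp)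

lemma odd_cubic_term_bounds:
  fixes s x :: real assumes s: "256 \<le> s" and x: "(1 + \<bar>x\<bar>)^8 \<le> s"
  shows "\<bar>(x/2 - x^3/6) / s\<bar> \<le> 1/16" "((x/2 - x^3/6) / s)\<^sup>2 \<le> (1 + \<bar>x\<bar>)^8 / s\<^sup>2"
proof -
  define X where "X = 1 + \<bar>x\<bar>"
  have X: "1 \<le> X" "\<bar>x\<bar> \<le> X" by (simp_all add: X_def)
  have "\<bar>x/2 - x^3/6\<bar> \<le> \<bar>x\<bar>/2 + \<bar>x\<bar>^3/6"
    using abs_triangle_ineq4[of "x/2" "x^3/6"] by (simp add: power_abs)
  also have "\<dots> \<le> X/2 + X^3/6" using X(2) power_mono[OF X(2) abs_ge_zero, of 3] by linarith
  also have "\<dots> \<le> X^3" using power_increasing[of 1 3 X] X(1) by simp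
  finally have le: "\<bar>(x/2 - x^3/6) / s\<bar> \<le> X^3 / s" using s unfolding abs_divide by (simp add: divide_right_mono)
  have "X^3 / s \<le> (s / 16) / s" using one_plus_abs_cube_le[OF s x] s unfolding X_def by (intro divide_right_mono) auto
  moreover have "(s / 16) / s = 1/16" using s by simp
  ultimately show "\<bar>(x/2 - x^3/6) / s\<bar> \<le> 1/16" using le by linarith
  have "((x/2 - x^3/6) / s)\<^sup>2 \<le> (X^3 / s)\<^sup>2" using power_mono[OF le abs_ge_zero, of 2] by (simp only: power2_abs)
  also have "\<dots> \<le> X^8 / s\<^sup>2" using X(1) by (simp add: power_divide divide_right_mono power_increasing flip: power_mult)
  finally show "((x/2 - x^3/6) / s)\<^sup>2 \<le> (1 + \<bar>x\<bar>)^8 / s\<^sup>2" unfolding X_def .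
qed

lemma central_remainder_bounds:
  fixes s x r :: real
  assumes s: "256 \<le> s" and x: "(1 + \<bar>x\<bar>)^8 \<le> s" and r: "\<bar>r\<bar> \<le> 21 * (1 + \<bar>x\<bar>)^4 / s\<^sup>2"
  shows "\<bar>r\<bar> \<le> 1/8" "\<bar>r\<bar> \<le> 21 * ((1 + \<bar>x\<bar>)^8 / s\<^sup>2)" "r\<^sup>2 \<le> 441 * ((1 + \<bar>x\<bar>)^8 / s\<^sup>2)"
proof -
  define X where "X = 1 + \<bar>x\<bar>"
  define Y where "Y = X^8 / s\<^sup>2"
  have "21 * X^4 / s\<^sup>2 \<le> 21 * Y" unfolding Y_def by (simp add: X_def divide_right_mono power_increasing)
  hence r_le: "\<bar>r\<bar> \<le> 21 * Y" using r unfolding X_def by linarith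
  thus "\<bar>r\<bar> \<le> 21 * ((1 + \<bar>x\<bar>)^8 / s\<^sup>2)" unfolding Y_def X_def .
  have "21 * Y \<le> 21 * (s / s\<^sup>2)" unfolding Y_def X_def using x by (intro mult_left_mono divide_right_mono) auto
  also have "\<dots> \<le> 1/8" using s by (simp add: power2_eq_square field_simps)
  finally show "\<bar>r\<bar> \<le> 1/8" using r_le by linarith
  have "r\<^sup>2 \<le> (21 * X^4 / s\<^sup>2)\<^sup>2" using power_mono[OF r abs_ge_zero, of 2] by (simp add: X_def)
  also have "\<dots> = 441 * Y * (1 / s\<^sup>2)" unfolding Y_def by (simp add: power_divide power2_eq_square flip: power_add)
  also have "\<dots> \<le> 441 * Y * 1"
    using one_le_power[of s 2] s unfolding Y_def by (intro mult_left_mono) auto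
  finally show "r\<^sup>2 \<le> 441 * ((1 + \<bar>x\<bar>)^8 / s\<^sup>2)" by (simp add: Y_def X_def)
qed

lemma exp_odd_correction_le:
  fixes s x r1 r2 :: real
  assumes s: "256 \<le> s" and x: "(1 + \<bar>x\<bar>)^8 \<le> s"
    and r: "\<bar>r1\<bar> \<le> 21 * (1 + \<bar>x\<bar>)^4 / s\<^sup>2" "\<bar>r2\<bar> \<le> 21 * (1 + \<bar>x\<bar>)^4 / s\<^sup>2"
  defines "a \<equiv> (x/2 - x^3/6) / s"
  shows "\<bar>exp (a + r1) - exp (- a + r2) - 2 * a\<bar> \<le> 5346 * ((1 + \<bar>x\<bar>)^8 / s\<^sup>2)"
proof -
  note a = odd_cubic_term_bounds[OF s x, folded a_def]
  note r1 = central_remainder_bounds[OF s x r(1)] and r2 = central_remainder_bounds[OF s x r(2)]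
  have "\<bar>a + r1\<bar> \<le> 1" "\<bar>- a + r2\<bar> \<le> 1"
    using abs_triangle_ineq[of a r1] abs_triangle_ineq[of "- a" r2] abs_minus_cancel[of a] a r1 r2 by linarith+
  hence "\<bar>exp (a + r1) - exp (- a + r2) - 2 * a\<bar> \<le> 12 * a\<^sup>2 + 6 * r1\<^sup>2 + 6 * r2\<^sup>2 + \<bar>r1\<bar> + \<bar>r2\<bar>"
    by (rule abs_exp_odd_diff_le)
  also have "\<dots> \<le> 5346 * ((1 + \<bar>x\<bar>)^8 / s\<^sup>2)" using a r1 r2 by linarith
  finally show ?thesis .
qed

lemma odd_profile_tail_le:
  fixes s x :: real
  assumes s: "256 \<le> s" and large: "s < (1 + \<bar>x\<bar>)^8"
  shows "\<bar>(1 / (3 * sqrt (2 * pi)) * x * (3 - x\<^sup>2) * exp (- x\<^sup>2/2)) / s\<^sup>2\<bar>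
           \<le> (256 * 6145) * (256^3 * 8^12 * fact 12 / s^3)"
proof -
  define X where "X = 1 + \<bar>x\<bar>"
  have X1: "1 \<le> X" and xX: "\<bar>x\<bar> \<le> X" by (simp_all add: X_def)
  have "x\<^sup>2 \<le> X\<^sup>2" "1 \<le> X\<^sup>2" using power_mono[OF xX abs_ge_zero, of 2] one_le_power[OF X1, of 2] by simp_all
  hence "\<bar>3 - x\<^sup>2\<bar> \<le> 3 * X\<^sup>2" using zero_le_power2[of x] unfolding abs_le_iff by linarith
  hence "\<bar>x * (3 - x\<^sup>2)\<bar> \<le> X * (3 * X\<^sup>2)" unfolding abs_mult using xX X1 by (intro mult_mono) auto
  also have "\<dots> \<le> 3 * X^8" using power_increasing[of 3 8 X] X1 by (simp add: power2_eq_square power3_eq_cube)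
  finally have poly: "\<bar>x * (3 - x\<^sup>2)\<bar> \<le> 3 * X^8" .
  have "\<bar>(1 / (3 * sqrt (2 * pi)) * x * (3 - x\<^sup>2) * exp (- x\<^sup>2/2)) / s\<^sup>2\<bar>
        = \<bar>x * (3 - x\<^sup>2)\<bar> * exp (- x\<^sup>2/2) / (3 * sqrt (2 * pi) * s\<^sup>2)"
    by (simp add: abs_mult)
  also have "\<dots> \<le> (3 * X^8) * exp (- x\<^sup>2/2) / (3 * 1 * 1)"
    using poly s pi_gt3 one_le_power[of s 2] by (intro frac_le mult_right_mono mult_mono) auto
  also have "\<dots> = (X^8 * exp (- x\<^sup>2/4)) * exp (- x\<^sup>2/8) * exp (- x\<^sup>2/8)"
    by (simp flip: exp_add)
  also have "\<dots> \<le> (256 * 6145) * (256^3 * 8^12 * fact 12 / s^3) * 1"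
    using one_plus_abs_pow8_mult_exp_le[of x] exp_neg_sq_le_of_large_pow8[OF s large] s unfolding X_def
    by (intro mult_mono[OF mult_mono]) auto
  finally show ?thesis by simp
qed

lemma abs_power_le_one_plus_abs_power:
  fixes x :: real
  assumes "k \<le> n"
  shows "\<bar>x\<bar>^k \<le> (1 + \<bar>x\<bar>)^n"
proof -
  have "\<bar>x\<bar>^k \<le> (1 + \<bar>x\<bar>)^k" by (intro power_mono) auto
  also have "\<dots> \<le> (1 + \<bar>x\<bar>)^n" using assms by (intro power_increasing) auto
  finally show ?thesis .
qed

lemma abs_divide_le_of_le:
  fixes a b c :: real
  assumes "\<bar>a\<bar> \<le> c * b" "0 < c"
  shows "\<bar>a / c\<bar> \<le> b"
  using assms by (simp add: abs_divide pos_divide_le_eq mult.commute)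

lemma mult_power4_le_of_abs_mult_eq:
  fixes c w x s :: real
  assumes "c * \<bar>w\<bar> = s * \<bar>x\<bar>" "\<bar>w\<bar> \<le> \<bar>x\<bar> / s" "0 < s"
  shows "c * w^4 \<le> \<bar>x\<bar>^4 / s\<^sup>2"
proof -
  have "\<bar>w\<bar>^3 * \<bar>w\<bar> = w^4" by (simp add: power_abs power_Suc2[symmetric] del: power_Suc2)
  hence "c * w^4 = s * \<bar>x\<bar> * \<bar>w\<bar>^3" using assms(1) by (metis mult.assoc mult.commute)
  also have "\<dots> \<le> s * \<bar>x\<bar> * (\<bar>x\<bar> / s)^3" using assms(2,3) by (intro mult_left_mono power_mono) auto
  also have "\<dots> = \<bar>x\<bar>^4 / s\<^sup>2" using assms(3) by (simp add: power3_eq_cube power2_eq_square power4_eq_xxxx)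
  finally show ?thesis .
qed

definition bennett :: "real \<Rightarrow> real" where
  "bennett w = (1 + w) * ln (1 + w) - w"

lemma abs_bennett_minus_cubic_le:
  fixes w :: real assumes w: "\<bar>w\<bar> \<le> 1/2"
  shows "\<bar>bennett w - (w\<^sup>2/2 - w^3/6)\<bar> \<le> 10/3 * w^4"
proof -
  define e where "e = ln (1 + w) - (w - w\<^sup>2/2 + w^3/3)"
  have e: "\<bar>e\<bar> \<le> 2 * w^4" unfolding e_def by (rule abs_ln_one_plus_x_minus_cubic_bound[OF w])
  have "bennett w - (w\<^sup>2/2 - w^3/6) = w^4/3 + (1 + w) * e"
    unfolding bennett_def e_def by (simp add: field_simps power2_eq_square power3_eq_cube power4_eq_xxxx)
  moreover have "\<bar>(1 + w) * e\<bar> \<le> 3/2 * (2 * w^4)"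
    unfolding abs_mult using w e by (intro mult_mono) auto
  moreover have "0 \<le> w^4" by (simp add: zero_le_even_power)
  ultimately show ?thesis unfolding abs_le_iff by linarith
qed

lemma bennett_ge_quarter_sq:
  fixes w :: real assumes w: "\<bar>w\<bar> \<le> 1/4"
  shows "w\<^sup>2/4 \<le> bennett w"
proof -
  have "\<bar>w^3\<bar> = \<bar>w\<bar> * w\<^sup>2" by (simp add: power2_eq_square power3_eq_cube abs_mult)
  also have "\<dots> \<le> 1/4 * w\<^sup>2" using w by (intro mult_right_mono) auto
  finally have "\<bar>w^3\<bar> \<le> 1/4 * w\<^sup>2" .
  moreover have "w^4 \<le> 1/16 * w\<^sup>2"
  proof -
    have "w\<^sup>2 \<le> (1/4)\<^sup>2" using w by (metis abs_ge_zero power2_abs power_mono)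
    hence "w\<^sup>2 * w\<^sup>2 \<le> 1/16 * w\<^sup>2" by (intro mult_right_mono) (auto simp: power_divide)
    thus ?thesis by (simp add: power4_eq_xxxx power2_eq_square)
  qed
  ultimately show ?thesis using abs_bennett_minus_cubic_le[of w] w unfolding abs_le_iff by linarith
qed

definition stirling_diff :: "real \<Rightarrow> real" where
  "stirling_diff z = ln (Gamma (z + 1)) - ((z + 1/2) * ln z - z)"

lemma ln_Gamma_add_two:
  fixes z :: real assumes "z > 0"
  shows "ln (Gamma (z + 2)) = ln (z + 1) + ln (Gamma (z + 1))"
proof -
  have "Gamma (z + 2) = (z + 1) * Gamma (z + 1)"
  proof -
    have "z + 1 \<notin> \<int>\<^sub>\<le>\<^sub>0" using assms by (auto elim!: nonpos_Ints_cases)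
    thus ?thesis using Gamma_plus1[of "z+1"] by (simp add: add.assoc)
  qed
  moreover have g: "Gamma (z+1) > 0" using assms by (intro Gamma_real_pos) simp
  ultimately show ?thesis using assms ln_mult[of "z+1" "Gamma (z+1)"] by (simp add: less_imp_neq[OF g, symmetric])
qed

lemma stirling_diff_step_bound:
  fixes z :: real assumes "z \<ge> 1"
  shows "\<bar>stirling_diff z - stirling_diff (z + 1)\<bar> \<le> 1 / z\<^sup>2"
proof -
  have z0: "z > 0" using assms by simp
  have "stirling_diff z - stirling_diff (z + 1) = (z + 1/2) * (ln (z + 1) - ln z) - 1"
    unfolding stirling_diff_def using ln_Gamma_add_two[OF z0] by (simp add: algebra_simps add.assoc)
  also have "ln (z + 1) - ln z = ln (1 + 1/z)"
  proof -
    have "1 + 1/z = (z+1)/z" using z0 by (simp add: field_simps)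
    thus ?thesis using z0 by (simp add: ln_div)
  qed
  finally have eq: "stirling_diff z - stirling_diff (z + 1) = (z + 1/2) * ln (1 + 1/z) - 1" .
  define t where "t = 1/z"
  have t0: "t > 0" using z0 by (simp add: t_def)
  have zt: "z = 1/t" using z0 by (simp add: t_def)
  have t1: "t \<le> 1" using assms by (simp add: t_def)
  have lo: "t - t\<^sup>2/2 \<le> ln (1 + t)" using ln_one_plus_ge_quadratic t0 by simp
  have hi: "ln (1 + t) \<le> t - t\<^sup>2/2 + t^3/3" using ln_one_plus_le_cubic t0 by simp
  have zp: "z + 1/2 > 0" using z0 by simp
  have "(z + 1/2) * ln (1 + t) - 1 \<le> (z + 1/2) * (t - t\<^sup>2/2 + t^3/3) - 1"
    using mult_left_mono[OF hi, of "z+1/2"] zp by simp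
  also have "\<dots> = t\<^sup>2/12 + t^3/6" unfolding zt using t0
    by (simp add: field_simps power2_eq_square power3_eq_cube)
  also have "\<dots> \<le> t\<^sup>2"
  proof -
    have "t^3 \<le> t^2" using power_decreasing[of 2 3 t] t0 t1 by simp
    thus ?thesis using zero_le_power2[of t] by linarith
  qed
  finally have u: "(z + 1/2) * ln (1 + t) - 1 \<le> t\<^sup>2" .
  have "(z + 1/2) * (t - t\<^sup>2/2) - 1 \<le> (z + 1/2) * ln (1 + t) - 1"
    using mult_left_mono[OF lo, of "z+1/2"] zp by simp
  moreover have "(z + 1/2) * (t - t\<^sup>2/2) - 1 = - t\<^sup>2/4" unfolding zt using t0
    by (simp add: field_simps power2_eq_square)
  ultimately have l: "- t\<^sup>2 \<le> (z + 1/2) * ln (1 + t) - 1"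
    using zero_le_power2[of t] by linarith
  have "t\<^sup>2 = 1/z\<^sup>2" by (simp add: t_def power_divide)
  thus ?thesis using eq u l by (simp add: t_def abs_le_iff)
qed

lemma inverse_sq_le_two_div_diff:
  fixes y :: real assumes y1: "1 \<le> y"
  shows "1/y\<^sup>2 \<le> 2/y - 2/(y+1)"
proof -
  have yp: "y > 0" using y1 by simp
  have prod_eqs: "2/y * (y\<^sup>2*(y+1)) = 2*y*(y+1)" "2/(y+1) * (y\<^sup>2*(y+1)) = 2*y\<^sup>2"
    "1/y\<^sup>2 * (y\<^sup>2*(y+1)) = y+1"
    using yp by (simp_all add: power2_eq_square)
  have "(2/y - 2/(y+1) - 1/y\<^sup>2) * (y\<^sup>2*(y+1)) = y - 1"
    unfolding left_diff_distrib prod_eqs by (simp add: algebra_simps power2_eq_square)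
  moreover have "y\<^sup>2*(y+1) > 0" using yp by simp
  ultimately have "2/y - 2/(y+1) - 1/y\<^sup>2 \<ge> 0" using y1
    by (metis diff_ge_0_iff_ge zero_le_mult_iff not_less)
  thus ?thesis by linarith
qed

lemma stirling_diff_telescope_bound:
  fixes z :: real assumes "z \<ge> 1"
  shows "\<bar>stirling_diff z - stirling_diff (z + real k)\<bar> \<le> 2/z - 2/(z + real k)"
proof (induction k)
  case 0 thus ?case by simp
next
  case (Suc k)
  define y where "y = z + real k"
  have y1: "y \<ge> 1" using assms by (simp add: y_def)
  have step: "\<bar>stirling_diff y - stirling_diff (y + 1)\<bar> \<le> 1/y\<^sup>2" using stirling_diff_step_bound[OF y1] .
  have "1/y\<^sup>2 \<le> 2/y - 2/(y+1)" by (rule inverse_sq_le_two_div_diff[OF y1])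
  moreover have "\<bar>stirling_diff z - stirling_diff y\<bar> \<le> 2/z - 2/y" using Suc.IH by (simp add: y_def)
  ultimately have "\<bar>stirling_diff z - stirling_diff (y+1)\<bar> \<le> 2/z - 2/(y+1)" using step by linarith
  moreover have shift: "z + real (Suc k) = y + 1" by (simp add: y_def)
  ultimately show ?case by (simp only: shift)
qed

lemma stirling_diff_shift_tendsto:
  fixes z :: real assumes z0: "z > 0"
  shows "(\<lambda>n. stirling_diff (z + real n) - stirling_diff (real n)) \<longlonglongrightarrow> 0"
proof -
  have zn: "z \<notin> \<int>\<^sub>\<le>\<^sub>0" using z0 by (auto elim!: nonpos_Ints_cases)
  have g: "Gamma z > 0" using z0 by simp
  have "(\<lambda>n. Gamma_series z n / Gamma z) \<longlonglongrightarrow> Gamma z / Gamma z"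
    by (intro tendsto_intros) (use g in auto)
  hence "(\<lambda>n. ln (Gamma_series z n / Gamma z)) \<longlonglongrightarrow> ln 1"
    using g by (intro tendsto_ln) auto
  hence A: "(\<lambda>n. ln (Gamma_series z n / Gamma z)) \<longlonglongrightarrow> 0" by simp
  have B: "(\<lambda>n::nat. z * ln n - (z + n + 1/2) * ln (z + n) + (n + 1/2) * ln n + z) \<longlonglongrightarrow> 0"
    using z0 by real_asymp
  have ev: "eventually (\<lambda>n. - ln (Gamma_series z n / Gamma z) + (z * ln n - (z + n + 1/2) * ln (z + n) + (n + 1/2) * ln n + z) = stirling_diff (z + real n) - stirling_diff (real n)) sequentially"
    using eventually_ge_at_top[of "1::nat"]
  proof eventually_elim
    case (elim n)
    have n0: "real n > 0" using elim by simp
    have p: "pochhammer z (n+1) = Gamma (z + real n + 1) / Gamma z"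
      using pochhammer_Gamma[OF zn, of "n+1"] by (simp add: add_ac)
    have gp: "Gamma (z + real n + 1) > 0" using z0 by simp
    have "Gamma_series z n / Gamma z = fact n * exp (z * ln (real n)) / Gamma (z + real n + 1)"
      unfolding Gamma_series_def p using g gp by (simp add: field_simps)
    hence "ln (Gamma_series z n / Gamma z) = ln (fact n) + z * ln (real n) - ln (Gamma (z + real n + 1))"
      using gp by (simp add: ln_div ln_mult)
    moreover have "Gamma (real n + 1) = fact n" using Gamma_fact[of n, where 'a=real] by (simp add: add.commute)
    ultimately show ?case unfolding stirling_diff_def by (simp add: algebra_simps)
  qed
  have "(\<lambda>n. - ln (Gamma_series z n / Gamma z) + (z * ln n - (z + n + 1/2) * ln (z + n) + (n + 1/2) * ln n + z)) \<longlonglongrightarrow> - 0 + 0"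
    by (intro tendsto_add tendsto_minus A B)
  thus ?thesis using tendsto_cong[OF ev] by simp
qed

lemma Gamma_legendre_duplication_real:
  fixes z :: real assumes z: "z > 0"
  shows "Gamma z * Gamma (z + 1/2) = exp ((1 - 2*z) * ln 2) * sqrt pi * Gamma (2*z)"
proof -
  have a: "complex_of_real z \<notin> \<int>\<^sub>\<le>\<^sub>0" using z
    by (auto elim!: nonpos_Ints_cases simp: complex_eq_iff)
  have b: "complex_of_real z + 1/2 \<notin> \<int>\<^sub>\<le>\<^sub>0" using z
    by (auto elim!: nonpos_Ints_cases simp: complex_eq_iff)
  have "complex_of_real (Gamma z * Gamma (z + 1/2)) = complex_of_real (exp ((1 - 2*z) * ln 2) * sqrt pi * Gamma (2*z))"
    using Gamma_legendre_duplication[OF a b] by (simp add: Gamma_complex_of_real[symmetric] exp_of_real[symmetric])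
  thus ?thesis by (simp only: of_real_eq_iff)
qed

lemma stirling_diff_duplication:
  fixes z :: real assumes z: "z > 0"
  shows "stirling_diff z + stirling_diff (z + 1/2) - stirling_diff (2*z + 1)
           = ln pi / 2 - (2*z + 1) * ln 2
             - ((z + 1/2) * ln z + (z + 1) * ln (z + 1/2) - (2*z + 3/2) * ln (2*z + 1) + 1/2)"
proof -
  have pos: "Gamma (z + 1) > 0" "Gamma (z + 1 + 1/2) > 0" "Gamma (2*(z + 1)) > 0"
    using z by (auto intro!: Gamma_real_pos)
  have "ln (Gamma (z + 1) * Gamma (z + 1 + 1/2))
          = ln (exp ((1 - 2*(z + 1)) * ln 2) * sqrt pi * Gamma (2*(z + 1)))"
    using Gamma_legendre_duplication_real[of "z + 1"] z by simp
  hence "ln (Gamma (z + 1)) + ln (Gamma (z + 1 + 1/2))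
          = (1 - 2*(z + 1)) * ln 2 + ln pi / 2 + ln (Gamma (2*(z + 1)))"
    using pos by (simp add: ln_mult_pos ln_mult ln_sqrt)
  moreover have "z + 1/2 + 1 = z + 1 + 1/2" "2*z + 1 + 1 = 2*(z + 1)" by simp_all
  ultimately show ?thesis unfolding stirling_diff_def by (simp add: algebra_simps)
qed

text \<open>Legendre's duplication formula identifies the constant, so no Wallis product is needed.\<close>

lemma stirling_diff_nat_tendsto: "(\<lambda>n. stirling_diff (real n)) \<longlonglongrightarrow> (ln 2 + ln pi) / 2"
proof -
  define D where "D z = ln pi / 2 - (2*z + 1) * ln 2
      - ((z + 1/2) * ln z + (z + 1) * ln (z + 1/2) - (2*z + 3/2) * ln (2*z + 1) + 1/2)" for z :: real
  have D_tendsto: "(\<lambda>n. D (real n)) \<longlonglongrightarrow> (ln 2 + ln pi) / 2" unfolding D_def by real_asymp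
  have half_shift: "(\<lambda>n. stirling_diff (1/2 + real n) - stirling_diff (real n)) \<longlonglongrightarrow> 0"
    by (rule stirling_diff_shift_tendsto) simp
  have doubling: "(\<lambda>n. stirling_diff (real n + real (Suc n)) - stirling_diff (real n)) \<longlonglongrightarrow> 0"
  proof (rule Lim_null_comparison)
    show "eventually (\<lambda>n. norm (stirling_diff (real n + real (Suc n)) - stirling_diff (real n))
            \<le> 2 / real n) sequentially"
      using eventually_ge_at_top[of "1::nat"]
    proof eventually_elim
      case (elim n)
      hence "real n \<ge> 1" by simp
      from stirling_diff_telescope_bound[OF this, of "Suc n"] show ?case
        by (simp add: abs_minus_commute) (smt (verit) divide_nonneg_nonneg of_nat_0_le_iff)
    qed
    show "(\<lambda>n::nat. 2 / real n) \<longlonglongrightarrow> 0" by real_asymp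
  qed
  have "eventually (\<lambda>n. D (real n) - (stirling_diff (1/2 + real n) - stirling_diff (real n))
          + (stirling_diff (real n + real (Suc n)) - stirling_diff (real n)) = stirling_diff (real n))
        sequentially"
    using eventually_ge_at_top[of "1::nat"]
  proof eventually_elim
    case (elim n)
    have "real n + real (Suc n) = 2 * real n + 1" "1/2 + real n = real n + 1/2" by simp_all
    thus ?case using stirling_diff_duplication[of "real n"] elim unfolding D_def by (simp only:) simp
  qed
  moreover have "(\<lambda>n. D (real n) - (stirling_diff (1/2 + real n) - stirling_diff (real n))
      + (stirling_diff (real n + real (Suc n)) - stirling_diff (real n))) \<longlonglongrightarrow> (ln 2 + ln pi) / 2 - 0 + 0"
    by (intro tendsto_add tendsto_diff D_tendsto half_shift doubling)
  ultimately show ?thesis using tendsto_cong by force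
qed

lemma ln_Gamma_stirling_bound:
  fixes z :: real assumes z: "z \<ge> 1"
  shows "\<bar>ln (Gamma (z + 1)) - ((z + 1/2) * ln z - z + ln (2*pi) / 2)\<bar> \<le> 2 / z"
proof -
  have l: "(\<lambda>n. (stirling_diff (z + real n) - stirling_diff (real n)) + stirling_diff (real n)) \<longlonglongrightarrow> 0 + (ln 2 + ln pi) / 2"
    by (intro tendsto_add stirling_diff_shift_tendsto stirling_diff_nat_tendsto) (use z in simp)
  hence "(\<lambda>n. \<bar>stirling_diff z - stirling_diff (z + real n)\<bar>) \<longlonglongrightarrow> \<bar>stirling_diff z - (ln 2 + ln pi) / 2\<bar>"
    by (intro tendsto_intros) simp
  moreover have "\<forall>n. \<bar>stirling_diff z - stirling_diff (z + real n)\<bar> \<le> 2 / z"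
  proof
    fix n
    have "2 / (z + real n) \<ge> 0" using z by simp
    thus "\<bar>stirling_diff z - stirling_diff (z + real n)\<bar> \<le> 2 / z" using stirling_diff_telescope_bound[OF z, of n] by linarith
  qed
  ultimately have "\<bar>stirling_diff z - (ln 2 + ln pi) / 2\<bar> \<le> 2 / z"
    by (intro LIMSEQ_le_const2) auto
  moreover have "ln (2*pi) = ln 2 + ln pi" by (simp add: ln_mult)
  ultimately show ?thesis unfolding stirling_diff_def by (simp add: algebra_simps)
qed

lemma binom_interp_stirling:
  fixes Nn :: nat and mu m :: real
  assumes mu: "0 < mu" "mu < 1" and m: "m \<ge> 1" "real Nn - m \<ge> 1"
  shows "\<exists>\<rho>. \<bar>\<rho>\<bar> \<le> 2 / real Nn + 2 / m + 2 / (real Nn - m) \<and>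
     binom_interp Nn mu m =
       exp (- (m + 1/2) * ln (m / (real Nn * mu))
            - (real Nn - m + 1/2) * ln ((real Nn - m) / (real Nn * (1 - mu))) + \<rho>)
       / sqrt (2 * pi * (real Nn * mu * (1 - mu)))"
proof -
  define N where "N = real Nn"
  define n where "n = N - m"
  define q where "q = 1 - mu"
  define c where "c = ln (2 * pi) / 2"
  define r where "r z = ln (Gamma (z + 1)) - ((z + 1/2) * ln z - z + c)" for z
  define \<rho> where "\<rho> = r N - r n - r m"
  have pos: "N \<ge> 1" "n \<ge> 1" "q > 0" using m mu by (simp_all add: N_def n_def q_def)
  have r_le: "\<bar>r z\<bar> \<le> 2 / z" if "z \<ge> 1" for z
    unfolding r_def c_def using ln_Gamma_stirling_bound[OF that] .
  have rho_le: "\<bar>\<rho>\<bar> \<le> 2 / N + 2 / n + 2 / m"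
    using r_le[of N] r_le[of n] r_le[of m] pos m unfolding \<rho>_def by linarith
  have Gamma_pos: "Gamma (N + 1) > 0" "Gamma (n + 1) > 0" "Gamma (m + 1) > 0"
    using pos m by auto
  have b_pos: "binom_interp Nn mu m > 0"
    unfolding binom_interp_def N_def[symmetric] n_def[symmetric] q_def[symmetric]
    using Gamma_pos mu pos by simp
  have "ln (binom_interp Nn mu m)
      = ln (Gamma (N + 1)) - ln (Gamma (n + 1)) - ln (Gamma (m + 1)) + m * ln mu + n * ln q"
    unfolding binom_interp_def N_def[symmetric] n_def[symmetric] q_def[symmetric]
    using Gamma_pos mu pos by (simp add: ln_mult_pos ln_div less_imp_neq[symmetric])
  also have "\<dots> = - (m + 1/2) * ln (m / (N * mu)) - (n + 1/2) * ln (n / (N * q)) + \<rho>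
                   - ln (sqrt (2 * pi * (N * mu * q)))"
    using pos m mu
    by (simp add: r_def \<rho>_def c_def n_def ln_div ln_mult ln_sqrt algebra_simps add_divide_distrib)
  finally have "exp (ln (binom_interp Nn mu m))
      = exp (- (m + 1/2) * ln (m / (N * mu)) - (n + 1/2) * ln (n / (N * q)) + \<rho>
             - ln (sqrt (2 * pi * (N * mu * q))))"
    by simp
  moreover have "sqrt (2 * pi * (N * mu * q)) > 0" using pos mu by simp
  ultimately have "binom_interp Nn mu m
      = exp (- (m + 1/2) * ln (m / (N * mu)) - (n + 1/2) * ln (n / (N * q)) + \<rho>)
        / sqrt (2 * pi * (N * mu * q))"
    using b_pos by (simp add: exp_diff)
  with rho_le show ?thesis unfolding N_def n_def q_def by (intro exI[of _ \<rho>]) auto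
qed

text \<open>The assumptions hold
  for all large \<sigma> under the hypotheses of the corollary (binomial_scaling_of_large).\<close>

locale binomial_scaling =
  fixes s mu :: real and Nn :: nat
  assumes s_ge_4: "s \<ge> 4"
    and mu_pos: "0 < mu" and mu_less_1: "mu < 1"
    and variance_eq: "s\<^sup>2 = real Nn * mu * (1 - mu)"
    and mean_near: "\<bar>real Nn * mu - s\<^sup>2 - 1\<bar> \<le> 1/4"
begin

definition E :: real where "E = real Nn * mu"
definition F :: real where "F = real Nn - real Nn * mu"

lemma E_plus_F: "E + F = real Nn"
  by (simp add: E_def F_def)

lemma s_pos: "s > 0"
  using s_ge_4 by simp

lemma s_sq_ge_16: "s\<^sup>2 \<ge> 16"
  using power_mono[OF s_ge_4, of 2] by simp

lemma E_bounds: "s\<^sup>2 + 3/4 \<le> E" "E \<le> s\<^sup>2 + 5/4"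
  using mean_near unfolding abs_le_iff E_def by linarith+

lemma E_pos: "E > 0"
  using E_bounds s_sq_ge_16 by linarith

lemma E_le_twice_s_sq: "E \<le> 2 * s\<^sup>2"
  using E_bounds s_sq_ge_16 by linarith

lemma F_mult_mu: "F * mu = s\<^sup>2"
  using variance_eq by (simp add: F_def algebra_simps)

lemma E_mult_F: "E * F = (E + F) * s\<^sup>2"
proof -
  have "E * F = real Nn * (real Nn * mu * (1 - mu))" by (simp add: E_def F_def algebra_simps)
  thus ?thesis using variance_eq E_plus_F by simp
qed

lemma F_pos: "F > 0"
  using F_mult_mu mu_pos s_sq_ge_16 by (metis zero_less_mult_pos2 order.strict_trans2 zero_less_numeral)

lemma F_ge: "4/5 * (s\<^sup>2 * E) \<le> F"
proof -
  have "E * mu = E - s\<^sup>2" using variance_eq by (simp add: E_def algebra_simps)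
  hence "E * mu \<le> 5/4" using E_bounds by linarith
  hence "F * (E * mu) \<le> F * (5/4)" using F_pos by (intro mult_left_mono) auto
  moreover have "F * (E * mu) = (F * mu) * E" by (simp only: ac_simps)
  ultimately show ?thesis unfolding F_mult_mu by simp
qed

lemma three_E_le_F: "3 * E \<le> F"
proof -
  have "16 * E \<le> s\<^sup>2 * E" using s_sq_ge_16 E_pos by (intro mult_right_mono) auto
  thus ?thesis using F_ge E_pos by linarith
qed

definition binom_exponent :: "real \<Rightarrow> real" where
  "binom_exponent x = - (E - s * x + 1/2) * ln (1 - s * x / E)
                      - (F + s * x + 1/2) * ln (1 + s * x / F)"

lemma binom_interp_exponent_form:
  assumes x: "4 * (s * \<bar>x\<bar>) \<le> E"
  shows "\<exists>\<rho>. \<bar>\<rho>\<bar> \<le> 8 / s\<^sup>2 \<and>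
           binom_interp Nn mu (E - s * x) = exp (binom_exponent x + \<rho>) / (s * sqrt (2 * pi))"
proof -
  have sx: "\<bar>s * x\<bar> \<le> E / 4" using x s_pos by (simp add: abs_mult)
  have large: "3/4 * s\<^sup>2 \<le> E - s * x" "3/4 * s\<^sup>2 \<le> real Nn - (E - s * x)" "3/4 * s\<^sup>2 \<le> real Nn"
    using sx E_bounds three_E_le_F E_pos E_plus_F unfolding abs_le_iff by linarith+
  have ge_1: "1 \<le> E - s * x" "1 \<le> real Nn - (E - s * x)"
    using large s_sq_ge_16 by linarith+
  obtain \<rho> where \<rho>: "\<bar>\<rho>\<bar> \<le> 2 / real Nn + 2 / (E - s * x) + 2 / (real Nn - (E - s * x))"
    and b: "binom_interp Nn mu (E - s * x) =
       exp (- (E - s * x + 1/2) * ln ((E - s * x) / (real Nn * mu))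
            - (real Nn - (E - s * x) + 1/2) * ln ((real Nn - (E - s * x)) / (real Nn * (1 - mu))) + \<rho>)
       / sqrt (2 * pi * (real Nn * mu * (1 - mu)))"
    using binom_interp_stirling[OF mu_pos mu_less_1 ge_1] by blast
  have two_div_le: "2 / z \<le> 8 / (3 * s\<^sup>2)" if "3/4 * s\<^sup>2 \<le> z" for z
  proof -
    have "2 / z \<le> 2 / (3/4 * s\<^sup>2)" by (rule frac_le) (use that s_pos in auto)
    thus ?thesis by simp
  qed
  hence "\<bar>\<rho>\<bar> \<le> 3 * (8 / (3 * s\<^sup>2))"
    using \<rho> two_div_le[OF large(1)] two_div_le[OF large(2)] two_div_le[OF large(3)] by linarith
  hence "\<bar>\<rho>\<bar> \<le> 8 / s\<^sup>2" by simp
  moreover have "binom_interp Nn mu (E - s * x) = exp (binom_exponent x + \<rho>) / (s * sqrt (2 * pi))"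
  proof -
    have sqrt_eq: "sqrt (2 * pi * (real Nn * mu * (1 - mu))) = s * sqrt (2 * pi)"
      using variance_eq[symmetric] s_pos by (simp add: real_sqrt_mult)
    have EF_eqs: "real Nn * mu = E" "real Nn * (1 - mu) = F" "real Nn - (E - s * x) = F + s * x"
      using E_plus_F by (simp_all add: E_def F_def algebra_simps)
    have ratios: "(E - s * x) / E = 1 - s * x / E" "(F + s * x) / F = 1 + s * x / F"
      using E_pos F_pos by (simp_all add: diff_divide_distrib add_divide_distrib)
    from b[unfolded sqrt_eq] show ?thesis unfolding EF_eqs ratios binom_exponent_def by simp
  qed
  ultimately show ?thesis by blast
qed

lemma binom_exponent_eq_bennett:
  "binom_exponent x = - E * bennett (- (s * x / E)) - F * bennett (s * x / F)
                      - (ln (1 - s * x / E) + ln (1 + s * x / F)) / 2"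
proof -
  have "E * (1 + - (s * x / E)) = E - s * x" "F * (1 + s * x / F) = F + s * x"
    using E_pos F_pos by (simp_all add: algebra_simps)
  thus ?thesis unfolding binom_exponent_def bennett_def using E_pos F_pos
    by (simp add: algebra_simps)
qed

lemma binom_exponent_le:
  assumes x: "4 * (s * \<bar>x\<bar>) \<le> E"
  shows "binom_exponent x \<le> 1/2 - x\<^sup>2/8"
proof -
  define u where "u = s * x / E"
  define v where "v = s * x / F"
  have sx: "\<bar>s * x\<bar> \<le> E / 4" "\<bar>s * x\<bar> \<le> F / 4"
    using x s_pos three_E_le_F E_pos by (simp_all add: abs_mult)
  have uv: "\<bar>u\<bar> \<le> 1/4" "\<bar>v\<bar> \<le> 1/4"
    using sx E_pos F_pos by (simp_all add: u_def v_def abs_divide field_simps)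
  have ln_ge: "- 3/8 \<le> ln (1 + w)" if "\<bar>w\<bar> \<le> 1/4" for w :: real
  proof -
    have "w\<^sup>2 \<le> 1/16" using power_mono[OF that, of 2] by (simp add: power_divide)
    thus ?thesis using abs_ln_one_plus_x_minus_x_bound[of w] that unfolding abs_le_iff by linarith
  qed
  have "x\<^sup>2 / 8 \<le> E * bennett (- u)"
  proof -
    have "x\<^sup>2 / 8 = (s * x)\<^sup>2 / (2 * s\<^sup>2) / 4" using s_pos by (simp add: power_mult_distrib)
    also have "\<dots> \<le> (s * x)\<^sup>2 / E / 4" using E_le_twice_s_sq E_pos by (intro divide_right_mono frac_le) auto
    also have "\<dots> = E * (u\<^sup>2 / 4)" using E_pos by (simp add: u_def power2_eq_square)
    also have "\<dots> \<le> E * bennett (- u)"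
      using bennett_ge_quarter_sq[of "- u"] uv E_pos by (intro mult_left_mono) auto
    finally show ?thesis .
  qed
  moreover have "0 \<le> F * bennett v"
  proof -
    have "0 \<le> bennett v" using bennett_ge_quarter_sq[of v] uv zero_le_power2[of v] by linarith
    thus ?thesis using F_pos by simp
  qed
  ultimately show ?thesis
    using ln_ge[of "- u"] ln_ge[of v] uv
    unfolding binom_exponent_eq_bennett u_def[symmetric] v_def[symmetric] by (simp add: field_simps)
qed

lemma binom_interp_tail_le:
  assumes x: "4 * (s * \<bar>x\<bar>) \<le> E"
  shows "0 \<le> binom_interp Nn mu (E - s * x)" "binom_interp Nn mu (E - s * x) \<le> 3 * exp (- x\<^sup>2/8) / s"
proof -
  obtain \<rho> where \<rho>: "\<bar>\<rho>\<bar> \<le> 8 / s\<^sup>2"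
    and b: "binom_interp Nn mu (E - s * x) = exp (binom_exponent x + \<rho>) / (s * sqrt (2 * pi))"
    using binom_interp_exponent_form[OF x] by blast
  have den: "s \<le> s * sqrt (2 * pi)" using s_pos pi_gt3 by simp
  show "0 \<le> binom_interp Nn mu (E - s * x)" unfolding b using s_pos by simp
  have "8 / s\<^sup>2 \<le> 8 / 16" using s_sq_ge_16 by (intro divide_left_mono) auto
  hence "binom_exponent x + \<rho> \<le> 1 + - x\<^sup>2/8" using binom_exponent_le[OF x] \<rho> by linarith
  hence "exp (binom_exponent x + \<rho>) \<le> exp 1 * exp (- x\<^sup>2/8)" by (simp flip: exp_add)
  also have "\<dots> \<le> 3 * exp (- x\<^sup>2/8)" using exp_le by (intro mult_right_mono) auto
  finally show "binom_interp Nn mu (E - s * x) \<le> 3 * exp (- x\<^sup>2/8) / s"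
    unfolding b using den s_pos by (intro frac_le) auto
qed

lemma abs_scaled_dev_E_le: "\<bar>s * x / E\<bar> \<le> \<bar>x\<bar> / s"
proof -
  have "\<bar>s * x / E\<bar> \<le> s * \<bar>x\<bar> / s\<^sup>2"
    using E_bounds E_pos s_pos by (auto simp: abs_mult abs_divide intro!: frac_le)
  thus ?thesis using s_pos by (simp add: power2_eq_square)
qed

lemma abs_scaled_dev_F_le: "\<bar>s * x / F\<bar> \<le> 2 * (\<bar>x\<bar> / s^3)"
proof -
  have F_lb: "4/5 * s^4 \<le> F"
  proof -
    have "s\<^sup>2 * s\<^sup>2 \<le> s\<^sup>2 * E" using E_bounds by (intro mult_left_mono) auto
    thus ?thesis using F_ge by (simp add: power4_eq_xxxx power2_eq_square)
  qed
  have "\<bar>s * x / F\<bar> = s * \<bar>x\<bar> / F" using F_pos s_pos by (simp add: abs_mult)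
  also have "\<dots> \<le> s * \<bar>x\<bar> / (4/5 * s^4)" by (rule frac_le) (use F_lb s_pos in auto)
  also have "\<dots> \<le> 2 * (\<bar>x\<bar> / s^3)"
    using s_pos by (simp add: field_simps power4_eq_xxxx power3_eq_cube)
  finally show ?thesis .
qed

lemma scaled_dev_E_approx: "\<bar>s * x / E - x / s\<bar> \<le> 5/4 * (\<bar>x\<bar> / s^3)"
proof -
  have "s * x / E - x / s = x * (s\<^sup>2 - E) / (s * E)"
    using s_pos E_pos by (simp add: field_simps power2_eq_square)
  also have "\<bar>\<dots>\<bar> \<le> \<bar>x\<bar> * (5/4) / (s * s\<^sup>2)"
    using E_bounds s_pos unfolding abs_mult abs_divide
    by (intro frac_le mult_left_mono mult_pos_pos) (auto simp: abs_le_iff)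
  finally show ?thesis by (simp add: power2_eq_square power3_eq_cube)
qed

lemma scaled_dev_E_cube_approx: "\<bar>s * x * (s * x / E)\<^sup>2 - x^3 / s\<bar> \<le> 5/2 * (\<bar>x\<bar>^3 / s^3)"
proof -
  have "s * x * (s * x / E)\<^sup>2 - x^3 / s = x^3 * ((s\<^sup>2 - E) * (s\<^sup>2 + E)) / (s * E\<^sup>2)"
    using s_pos E_pos by (simp add: field_simps power2_eq_square power3_eq_cube)
  also have "\<bar>\<dots>\<bar> \<le> \<bar>x\<bar>^3 * (5/4 * (2 * E)) / (s * (s\<^sup>2 * E))"
    using E_bounds s_pos E_pos unfolding abs_mult abs_divide power_abs
    by (intro frac_le mult_left_mono mult_mono mult_pos_pos) (auto simp: abs_le_iff power2_eq_square)
  also have "\<dots> = 5/2 * (\<bar>x\<bar>^3 / s^3)"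
    using s_pos E_pos by (simp add: field_simps power2_eq_square power3_eq_cube)
  finally show ?thesis .
qed

lemma binom_exponent_remainder_eq:
  fixes x :: real
  defines "u \<equiv> s * x / E" and "v \<equiv> s * x / F"
  shows "binom_exponent x + x\<^sup>2/2 - (x/2 - x^3/6) / s =
     - E * (bennett (- u) - (u\<^sup>2/2 + u^3/6)) - F * (bennett v - (v\<^sup>2/2 - v^3/6))
     - (s * x * u\<^sup>2 - x^3/s) / 6 + s * x * v\<^sup>2 / 6
     - (ln (1 - u) + u) / 2 - (ln (1 + v) - v) / 2 + (u - x/s) / 2 - v / 2"
proof -
  have Eu: "E * u = s * x" and Fv: "F * v = s * x"
    using E_pos F_pos by (simp_all add: u_def v_def)
  have "u + v = s * x * (E + F) / (E * F)"
    using E_pos F_pos by (simp add: u_def v_def field_simps)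
  also have "\<dots> = x / s" unfolding E_mult_F using E_pos F_pos s_pos by (simp add: power2_eq_square)
  finally have sum_uv: "s * x * (u + v) = x\<^sup>2" using s_pos by (simp add: power2_eq_square)
  have poly: "E * (u\<^sup>2/2 + u^3/6) + F * (v\<^sup>2/2 - v^3/6)
        = x\<^sup>2 / 2 + s * x * u\<^sup>2 / 6 - s * x * v\<^sup>2 / 6"
    unfolding sum_uv[symmetric] using Eu Fv by algebra
  show ?thesis unfolding binom_exponent_eq_bennett u_def[symmetric] v_def[symmetric]
    using poly by (simp add: algebra_simps diff_divide_distrib add_divide_distrib)
qed

lemma div_cube_le_div_sq: "0 \<le> a \<Longrightarrow> a / s^3 \<le> a / s\<^sup>2"
  using s_pos s_ge_4 by (intro divide_left_mono power_increasing) auto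

lemma abs_scaled_dev_F_le_weak: "\<bar>s * x / F\<bar> \<le> \<bar>x\<bar> / s"
proof -
  have "2 * (\<bar>x\<bar> / s^3) = (\<bar>x\<bar> / s) * (2 / s\<^sup>2)"
    using s_pos by (simp add: field_simps power3_eq_cube power2_eq_square)
  also have "\<dots> \<le> (\<bar>x\<bar> / s) * 1" using s_sq_ge_16 s_pos by (intro mult_left_mono) auto
  finally show ?thesis using abs_scaled_dev_F_le[of x] by simp
qed

lemma polynomial_remainders_le:
  "\<bar>(s * x * (s * x / E)\<^sup>2 - x^3/s) / 6\<bar> \<le> \<bar>x\<bar>^3 / s\<^sup>2"
  "\<bar>s * x * (s * x / F)\<^sup>2 / 6\<bar> \<le> \<bar>x\<bar>^3 / s\<^sup>2"
  "\<bar>(s * x / E - x/s) / 2\<bar> \<le> \<bar>x\<bar> / s\<^sup>2"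
  "\<bar>s * x / F / 2\<bar> \<le> \<bar>x\<bar> / s\<^sup>2"
proof -
  show "\<bar>(s * x * (s * x / E)\<^sup>2 - x^3/s) / 6\<bar> \<le> \<bar>x\<bar>^3 / s\<^sup>2"
    using scaled_dev_E_cube_approx[of x] div_cube_le_div_sq[of "\<bar>x\<bar>^3"]
    by (intro abs_divide_le_of_le) simp_all
  show "\<bar>(s * x / E - x/s) / 2\<bar> \<le> \<bar>x\<bar> / s\<^sup>2"
    using scaled_dev_E_approx[of x] div_cube_le_div_sq[of "\<bar>x\<bar>"] by (intro abs_divide_le_of_le) simp_all
  have "\<bar>s * x / F\<bar> \<le> 2 * (\<bar>x\<bar> / s\<^sup>2)"
    using abs_scaled_dev_F_le[of x] div_cube_le_div_sq[of "\<bar>x\<bar>"] by simp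
  thus "\<bar>s * x / F / 2\<bar> \<le> \<bar>x\<bar> / s\<^sup>2" by (rule abs_divide_le_of_le[where c = 2]) simp
  have "\<bar>s * x * (s * x / F)\<^sup>2\<bar> = s * \<bar>x\<bar> * (\<bar>s * x / F\<bar> * \<bar>s * x / F\<bar>)"
    using s_pos by (simp add: abs_mult power2_eq_square)
  also have "\<dots> \<le> s * \<bar>x\<bar> * (2 * (\<bar>x\<bar> / s^3) * (\<bar>x\<bar> / s))"
    using abs_scaled_dev_F_le[of x] abs_scaled_dev_F_le_weak[of x] s_pos by (intro mult_left_mono mult_mono) auto
  also have "\<dots> = 2 * (\<bar>x\<bar>^3 / s^3)" using s_pos by (simp add: power3_eq_cube field_simps)
  finally have "\<bar>s * x * (s * x / F)\<^sup>2\<bar> \<le> 2 * (\<bar>x\<bar>^3 / s^3)" .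
  moreover have "0 \<le> \<bar>x\<bar>^3 / s\<^sup>2" "\<bar>x\<bar>^3 / s^3 \<le> \<bar>x\<bar>^3 / s\<^sup>2" by (simp_all add: div_cube_le_div_sq)
  ultimately have "\<bar>s * x * (s * x / F)\<^sup>2\<bar> \<le> 6 * (\<bar>x\<bar>^3 / s\<^sup>2)" by linarith
  thus "\<bar>s * x * (s * x / F)\<^sup>2 / 6\<bar> \<le> \<bar>x\<bar>^3 / s\<^sup>2" by (rule abs_divide_le_of_le) simp
qed

context
  fixes x :: real
  assumes small: "4 * \<bar>x\<bar> \<le> s"
begin

lemma scaled_devs_le_half: "\<bar>s * x / E\<bar> \<le> 1/2" "\<bar>s * x / F\<bar> \<le> 1/2"
proof -
  have "\<bar>x\<bar> / s \<le> 1/4" using small s_pos by (simp add: field_simps)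
  thus "\<bar>s * x / E\<bar> \<le> 1/2" "\<bar>s * x / F\<bar> \<le> 1/2"
    using abs_scaled_dev_E_le[of x] abs_scaled_dev_F_le_weak[of x] by linarith+
qed

lemma bennett_remainders_le:
  "\<bar>E * (bennett (- (s * x / E)) - ((s * x / E)\<^sup>2/2 + (s * x / E)^3/6))\<bar> \<le> 10/3 * (\<bar>x\<bar>^4 / s\<^sup>2)"
  "\<bar>F * (bennett (s * x / F) - ((s * x / F)\<^sup>2/2 - (s * x / F)^3/6))\<bar> \<le> 10/3 * (\<bar>x\<bar>^4 / s\<^sup>2)"
proof -
  have "\<bar>E * (bennett (- (s * x / E)) - ((s * x / E)\<^sup>2/2 + (s * x / E)^3/6))\<bar> \<le> 10/3 * (E * (s * x / E)^4)"
    using abs_bennett_minus_cubic_le[of "- (s * x / E)"] scaled_devs_le_half E_pos by (simp add: abs_mult)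
  also have "E * (s * x / E)^4 \<le> \<bar>x\<bar>^4 / s\<^sup>2"
    using abs_scaled_dev_E_le[of x] E_pos s_pos by (intro mult_power4_le_of_abs_mult_eq) (simp_all add: abs_mult)
  finally show "\<bar>E * (bennett (- (s * x / E)) - ((s * x / E)\<^sup>2/2 + (s * x / E)^3/6))\<bar> \<le> 10/3 * (\<bar>x\<bar>^4 / s\<^sup>2)"
    by simp
  have "\<bar>F * (bennett (s * x / F) - ((s * x / F)\<^sup>2/2 - (s * x / F)^3/6))\<bar> \<le> 10/3 * (F * (s * x / F)^4)"
    using abs_bennett_minus_cubic_le[of "s * x / F"] scaled_devs_le_half F_pos by (simp add: abs_mult)
  also have "F * (s * x / F)^4 \<le> \<bar>x\<bar>^4 / s\<^sup>2"
    using abs_scaled_dev_F_le_weak[of x] F_pos s_pos by (intro mult_power4_le_of_abs_mult_eq) (simp_all add: abs_mult)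
  finally show "\<bar>F * (bennett (s * x / F) - ((s * x / F)\<^sup>2/2 - (s * x / F)^3/6))\<bar> \<le> 10/3 * (\<bar>x\<bar>^4 / s\<^sup>2)"
    by simp
qed

lemma ln_remainders_le:
  "\<bar>(ln (1 - s * x / E) + s * x / E) / 2\<bar> \<le> \<bar>x\<bar>^2 / s\<^sup>2"
  "\<bar>(ln (1 + s * x / F) - s * x / F) / 2\<bar> \<le> \<bar>x\<bar>^2 / s\<^sup>2"
proof -
  have sq: "w\<^sup>2 \<le> \<bar>x\<bar>^2 / s\<^sup>2" if "\<bar>w\<bar> \<le> \<bar>x\<bar> / s" for w
    using power_mono[OF that abs_ge_zero, of 2] by (simp add: power_divide)
  have "\<bar>ln (1 - s * x / E) + s * x / E\<bar> \<le> 2 * (s * x / E)\<^sup>2"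
    using abs_ln_one_plus_x_minus_x_bound[of "- (s * x / E)"] scaled_devs_le_half by simp
  thus "\<bar>(ln (1 - s * x / E) + s * x / E) / 2\<bar> \<le> \<bar>x\<bar>^2 / s\<^sup>2"
    using sq[OF abs_scaled_dev_E_le] by (intro abs_divide_le_of_le) simp_all
  have "\<bar>ln (1 + s * x / F) - s * x / F\<bar> \<le> 2 * (s * x / F)\<^sup>2"
    using abs_ln_one_plus_x_minus_x_bound[of "s * x / F"] scaled_devs_le_half by simp
  thus "\<bar>(ln (1 + s * x / F) - s * x / F) / 2\<bar> \<le> \<bar>x\<bar>^2 / s\<^sup>2"
    using sq[OF abs_scaled_dev_F_le_weak] by (intro abs_divide_le_of_le) simp_all
qed

end

lemma binom_exponent_central:
  assumes x: "4 * (1 + \<bar>x\<bar>) \<le> s"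
  shows "\<bar>binom_exponent x + x\<^sup>2/2 - (x/2 - x^3/6) / s\<bar> \<le> 13 * (1 + \<bar>x\<bar>)^4 / s\<^sup>2"
proof -
  have small: "4 * \<bar>x\<bar> \<le> s" using x by simp
  have "\<bar>binom_exponent x + x\<^sup>2/2 - (x/2 - x^3/6) / s\<bar>
        \<le> 20/3 * (\<bar>x\<bar>^4 / s\<^sup>2) + 2 * (\<bar>x\<bar>^3 / s\<^sup>2) + 2 * (\<bar>x\<bar>^2 / s\<^sup>2) + 2 * (\<bar>x\<bar> / s\<^sup>2)"
    using bennett_remainders_le[OF small] ln_remainders_le[OF small] polynomial_remainders_le[of x]
    unfolding binom_exponent_remainder_eq abs_le_iff
    by (elim conjE, intro conjI) linarith+
  also have "\<dots> = (20/3 * \<bar>x\<bar>^4 + 2 * \<bar>x\<bar>^3 + 2 * \<bar>x\<bar>^2 + 2 * \<bar>x\<bar>) / s\<^sup>2"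
    by (simp add: add_divide_distrib)
  also have "\<dots> \<le> 13 * (1 + \<bar>x\<bar>)^4 / s\<^sup>2"
    using abs_power_le_one_plus_abs_power[of 4 4 x] abs_power_le_one_plus_abs_power[of 3 4 x]
      abs_power_le_one_plus_abs_power[of 2 4 x] abs_power_le_one_plus_abs_power[of 1 4 x]
    by (intro divide_right_mono) auto
  finally show ?thesis .
qed

lemma binom_interp_central_form:
  assumes x: "4 * (1 + \<bar>x\<bar>) \<le> s"
  shows "\<exists>R. \<bar>R\<bar> \<le> 21 * (1 + \<bar>x\<bar>)^4 / s\<^sup>2 \<and>
     binom_interp Nn mu (E - s * x) = exp (- x\<^sup>2/2) * exp ((x/2 - x^3/6) / s + R) / (s * sqrt (2 * pi))"
proof -
  have "4 * (s * \<bar>x\<bar>) \<le> E"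
  proof -
    have "s * (4 * \<bar>x\<bar>) \<le> s * s" using x s_pos by (intro mult_left_mono) auto
    hence "4 * (s * \<bar>x\<bar>) \<le> s\<^sup>2" by (simp add: power2_eq_square mult.left_commute)
    thus ?thesis using E_bounds by linarith
  qed
  then obtain \<rho> where \<rho>: "\<bar>\<rho>\<bar> \<le> 8 / s\<^sup>2"
    and b: "binom_interp Nn mu (E - s * x) = exp (binom_exponent x + \<rho>) / (s * sqrt (2 * pi))"
    using binom_interp_exponent_form by blast
  define R where "R = binom_exponent x + x\<^sup>2/2 - (x/2 - x^3/6) / s + \<rho>"
  have "8 / s\<^sup>2 \<le> 8 * (1 + \<bar>x\<bar>)^4 / s\<^sup>2"
    using abs_power_le_one_plus_abs_power[of 0 4 x] by (intro divide_right_mono) auto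
  hence "\<bar>R\<bar> \<le> 21 * (1 + \<bar>x\<bar>)^4 / s\<^sup>2"
    using binom_exponent_central[OF x] \<rho> unfolding R_def by (simp add: add_divide_distrib abs_le_iff)
  moreover have "exp (binom_exponent x + \<rho>) = exp (- x\<^sup>2/2) * exp ((x/2 - x^3/6) / s + R)"
    unfolding R_def by (simp flip: exp_add)
  ultimately show ?thesis using b by auto
qed

lemma binom_odd_part_central:
  assumes s: "256 \<le> s" and x: "(1 + \<bar>x\<bar>)^8 \<le> s"
  shows "\<bar>binom_interp Nn mu (E - s * x) - binom_interp Nn mu (E - s * (- x))
           - (1 / (3 * sqrt (2 * pi)) * x * (3 - x\<^sup>2) * exp (- x\<^sup>2/2)) / s\<^sup>2\<bar>
         \<le> 5346 * (256 * 6145) / s^3"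
proof -
  define a where "a = (x/2 - x^3/6) / s"
  define K where "K = exp (- x\<^sup>2/2) / (s * sqrt (2 * pi))"
  have K_pos: "0 < K" unfolding K_def using s by simp
  have central: "4 * (1 + \<bar>x\<bar>) \<le> s" "4 * (1 + \<bar>- x\<bar>) \<le> s"
    using one_plus_abs_cube_le[OF s x] power_increasing[of 1 3 "1 + \<bar>x\<bar>"] s by simp_all
  obtain r1 where r1: "\<bar>r1\<bar> \<le> 21 * (1 + \<bar>x\<bar>)^4 / s\<^sup>2"
    and "binom_interp Nn mu (E - s * x) = exp (- x\<^sup>2/2) * exp (a + r1) / (s * sqrt (2 * pi))"
    using binom_interp_central_form[OF central(1)] unfolding a_def[symmetric] by blast
  hence b1: "binom_interp Nn mu (E - s * x) = K * exp (a + r1)" by (simp add: K_def)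
  have "- x/2 - (- x)^3/6 = - (x/2 - x^3/6)" by simp
  hence neg_a: "(- x/2 - (- x)^3/6) / s = - a" unfolding a_def by (simp only: minus_divide_left)
  obtain r2 where r2: "\<bar>r2\<bar> \<le> 21 * (1 + \<bar>- x\<bar>)^4 / s\<^sup>2"
    and "binom_interp Nn mu (E - s * (- x))
           = exp (- (- x)\<^sup>2/2) * exp ((- x/2 - (- x)^3/6) / s + r2) / (s * sqrt (2 * pi))"
    using binom_interp_central_form[OF central(2)] by blast
  hence b2: "binom_interp Nn mu (E - s * (- x)) = K * exp (- a + r2)" unfolding neg_a by (simp add: K_def)
  have "(1 / (3 * sqrt (2 * pi)) * x * (3 - x\<^sup>2) * exp (- x\<^sup>2/2)) / s\<^sup>2 = K * (2 * a)"
    unfolding K_def a_def using s by (simp add: field_simps power2_eq_square power3_eq_cube)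
  hence "\<bar>binom_interp Nn mu (E - s * x) - binom_interp Nn mu (E - s * (- x))
           - (1 / (3 * sqrt (2 * pi)) * x * (3 - x\<^sup>2) * exp (- x\<^sup>2/2)) / s\<^sup>2\<bar>
         = K * \<bar>exp (a + r1) - exp (- a + r2) - 2 * a\<bar>"
    unfolding b1 b2 using K_pos by (simp add: abs_mult flip: right_diff_distrib)
  also have "\<dots> \<le> K * (5346 * ((1 + \<bar>x\<bar>)^8 / s\<^sup>2))"
    using exp_odd_correction_le[OF s x r1] r2 K_pos unfolding a_def by (intro mult_left_mono) auto
  also have "\<dots> = 5346 * ((1 + \<bar>x\<bar>)^8 * exp (- x\<^sup>2/2)) / (sqrt (2 * pi) * s^3)"
    unfolding K_def using s by (simp add: field_simps power2_eq_square power3_eq_cube)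
  also have "\<dots> \<le> 5346 * ((1 + \<bar>x\<bar>)^8 * exp (- x\<^sup>2/4)) / (1 * s^3)"
    using s pi_gt3 by (intro frac_le mult_left_mono mult_right_mono) auto
  also have "\<dots> \<le> 5346 * (256 * 6145) / s^3"
    using one_plus_abs_pow8_mult_exp_le[of x] s by (simp add: divide_right_mono)
  finally show ?thesis .
qed

lemma binom_odd_part_tail:
  assumes s: "256 \<le> s" and x: "\<bar>x\<bar> \<le> s / 4" and large: "s < (1 + \<bar>x\<bar>)^8"
  shows "\<bar>binom_interp Nn mu (E - s * x) - binom_interp Nn mu (E - s * (- x))
           - (1 / (3 * sqrt (2 * pi)) * x * (3 - x\<^sup>2) * exp (- x\<^sup>2/2)) / s\<^sup>2\<bar>
         \<le> (6 + 256 * 6145) * (256^3 * 8^12 * fact 12) / s^3"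
proof -
  define T :: real where "T = 256^3 * 8^12 * fact 12"
  have tail: "exp (- x\<^sup>2/8) \<le> T / s^3"
    unfolding T_def by (rule exp_neg_sq_le_of_large_pow8[OF s large])
  have "4 * (s * \<bar>x\<bar>) \<le> s\<^sup>2" using x s by (simp add: power2_eq_square field_simps)
  hence central: "4 * (s * \<bar>x\<bar>) \<le> E" "4 * (s * \<bar>- x\<bar>) \<le> E" using E_bounds by simp_all
  have b_le: "0 \<le> binom_interp Nn mu (E - s * y)" "binom_interp Nn mu (E - s * y) \<le> 3 * (T / s^3)"
    if "4 * (s * \<bar>y\<bar>) \<le> E" "y\<^sup>2 = x\<^sup>2" for y
  proof -
    have "3 * exp (- y\<^sup>2/8) / s \<le> 3 * exp (- y\<^sup>2/8)" using s by (simp add: divide_le_eq)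
    thus "binom_interp Nn mu (E - s * y) \<le> 3 * (T / s^3)"
      using binom_interp_tail_le(2)[OF that(1)] tail that(2) by simp
  qed (rule binom_interp_tail_le(1)[OF that(1)])
  have g: "\<bar>(1 / (3 * sqrt (2 * pi)) * x * (3 - x\<^sup>2) * exp (- x\<^sup>2/2)) / s\<^sup>2\<bar> \<le> (256 * 6145) * (T / s^3)"
    unfolding T_def by (rule odd_profile_tail_le[OF s large])
  have "\<bar>binom_interp Nn mu (E - s * x) - binom_interp Nn mu (E - s * (- x))
           - (1 / (3 * sqrt (2 * pi)) * x * (3 - x\<^sup>2) * exp (- x\<^sup>2/2)) / s\<^sup>2\<bar>
        \<le> 3 * (T / s^3) + 3 * (T / s^3) + (256 * 6145) * (T / s^3)"
    using b_le[OF central(1)] b_le[OF central(2)] abs_le_D1[OF g] abs_le_D2[OF g]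
    by (intro abs_leI) simp_all
  thus ?thesis by (simp add: T_def field_simps)
qed

lemma binom_odd_part_bound:
  assumes s: "256 \<le> s" and x: "\<bar>x\<bar> \<le> s / 4"
  shows "\<bar>binom_interp Nn mu (E - s * x) - binom_interp Nn mu (E - s * (- x))
           - (1 / (3 * sqrt (2 * pi)) * x * (3 - x\<^sup>2) * exp (- x\<^sup>2/2)) / s\<^sup>2\<bar>
         \<le> (5346 * (256 * 6145) + (6 + 256 * 6145) * (256^3 * 8^12 * fact 12)) / s^3"
proof -
  define c1 :: real where "c1 = 5346 * (256 * 6145)"
  define c2 :: real where "c2 = (6 + 256 * 6145) * (256^3 * 8^12 * fact 12)"
  have "0 \<le> c1" "0 \<le> c2" unfolding c1_def c2_def by simp_all
  hence "c1 / s^3 \<le> (c1 + c2) / s^3" "c2 / s^3 \<le> (c1 + c2) / s^3"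
    using s by (simp_all add: divide_right_mono)
  moreover have "(1 + \<bar>x\<bar>)^8 \<le> s \<or> s < (1 + \<bar>x\<bar>)^8" by linarith
  ultimately show ?thesis
    using binom_odd_part_central[OF s] binom_odd_part_tail[OF s x]
    unfolding c1_def[symmetric] c2_def[symmetric] by fastforce
qed

end

lemma powr_one_minus_le_quarter:
  fixes s \<alpha> :: real
  assumes "0 < \<alpha>" and "4 powr (1 / \<alpha>) \<le> s"
  shows "s powr (1 - \<alpha>) \<le> s / 4"
proof -
  have s: "0 < s" using assms(2) powr_gt_zero[of 4 "1/\<alpha>"] by linarith
  have "4 = (4 powr (1 / \<alpha>)) powr \<alpha>" using assms(1) by (simp add: powr_powr)
  also have "\<dots> \<le> s powr \<alpha>" using assms by (intro powr_mono2) auto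
  finally have "s / s powr \<alpha> \<le> s / 4" using s by (intro divide_left_mono) auto
  thus ?thesis using s by (simp add: powr_diff)
qed

lemma binomial_scaling_of_large:
  fixes s mu K :: real and Nn :: nat
  assumes mu: "0 < mu" "mu < 1" and sigma: "s = sqrt (real Nn * mu * (1 - mu))"
    and mean: "\<bar>real Nn * mu - s\<^sup>2 - 1\<bar> \<le> K / s\<^sup>2"
    and large: "256 \<le> s" "4 * \<bar>K\<bar> \<le> s"
  shows "binomial_scaling s mu Nn"
proof
  show "4 \<le> s" "0 < mu" "mu < 1" using large mu by simp_all
  show "s\<^sup>2 = real Nn * mu * (1 - mu)" using sigma mu by simp
  have "s * 1 \<le> s * s" using large by (intro mult_left_mono) auto
  hence "4 * \<bar>K\<bar> \<le> s * s" using large by linarith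
  hence "K / s\<^sup>2 \<le> 1/4" using large by (simp add: power2_eq_square field_simps)
  thus "\<bar>real Nn * mu - s\<^sup>2 - 1\<bar> \<le> 1/4" using mean by linarith
qed

theorem corollary2p3:
  fixes \<Sigma> :: "real set" and N :: "real \<Rightarrow> nat" and mu :: "real \<Rightarrow> real" and \<alpha> :: real
  assumes pos: "\<Sigma> \<subseteq> {0<..}"
    and unbdd: "\<forall>M. \<exists>\<sigma>\<in>\<Sigma>. \<sigma> > M"
    and Npos: "\<forall>\<sigma>\<in>\<Sigma>. N \<sigma> > 0"
    and mu01: "\<forall>\<sigma>\<in>\<Sigma>. 0 < mu \<sigma> \<and> mu \<sigma> < 1"
    and sig: "\<forall>\<sigma>\<in>\<Sigma>. \<sigma> = sqrt (real (N \<sigma>) * mu \<sigma> * (1 - mu \<sigma>))"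
    and E: "\<exists>K s0. \<forall>\<sigma>\<in>\<Sigma>. \<sigma> > s0 \<longrightarrow>
              \<bar>real (N \<sigma>) * mu \<sigma> - \<sigma>\<^sup>2 - 1\<bar> \<le> K / \<sigma>\<^sup>2"
    and alpha: "\<alpha> > 0"
  shows "\<exists>C>0. \<exists>\<sigma>0. \<forall>\<sigma>\<in>\<Sigma>. \<sigma> > \<sigma>0 \<longrightarrow>
           (\<forall>x. \<bar>x\<bar> \<le> \<sigma> powr (1 - \<alpha>) \<longrightarrow>
              \<bar>bfun N mu \<sigma> x - bfun N mu \<sigma> (- x)
                 - (1 / (3 * sqrt (2 * pi)) * x * (3 - x\<^sup>2) * exp (- x\<^sup>2 / 2)) / \<sigma>\<^sup>2\<bar>
              \<le> C / \<sigma> ^ 3)"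
proof -
  obtain K s0 where K: "\<forall>\<sigma>\<in>\<Sigma>. \<sigma> > s0 \<longrightarrow> \<bar>real (N \<sigma>) * mu \<sigma> - \<sigma>\<^sup>2 - 1\<bar> \<le> K / \<sigma>\<^sup>2"
    using E by blast
  define C :: real where "C = 5346 * (256 * 6145) + (6 + 256 * 6145) * (256^3 * 8^12 * fact 12)"
  define \<sigma>0 where "\<sigma>0 = Max {s0, 256, 4 * \<bar>K\<bar>, 4 powr (1 / \<alpha>)}"
  have "\<bar>bfun N mu \<sigma> x - bfun N mu \<sigma> (- x)
          - (1 / (3 * sqrt (2 * pi)) * x * (3 - x\<^sup>2) * exp (- x\<^sup>2 / 2)) / \<sigma>\<^sup>2\<bar> \<le> C / \<sigma> ^ 3"
    if \<sigma>: "\<sigma> \<in> \<Sigma>" "\<sigma> > \<sigma>0" and x: "\<bar>x\<bar> \<le> \<sigma> powr (1 - \<alpha>)" for \<sigma> x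
  proof -
    have large: "s0 < \<sigma>" "256 \<le> \<sigma>" "4 * \<bar>K\<bar> \<le> \<sigma>" "4 powr (1 / \<alpha>) \<le> \<sigma>"
      using \<sigma>(2) unfolding \<sigma>0_def by auto
    interpret binomial_scaling \<sigma> "mu \<sigma>" "N \<sigma>"
      using binomial_scaling_of_large[of "mu \<sigma>" \<sigma> "N \<sigma>" K] mu01 sig K \<sigma>(1) large by auto
    have "\<bar>x\<bar> \<le> \<sigma> / 4" using x powr_one_minus_le_quarter[OF alpha large(4)] by linarith
    from binom_odd_part_bound[OF large(2) this] show ?thesis
      unfolding bfun_def C_def E_def by simp
  qed
  moreover have "C > 0" unfolding C_def by (intro add_pos_nonneg mult_nonneg_nonneg) auto
  ultimately show ?thesis by blast
qed

end
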